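(* Let $\nu$ be a sub-Gaussian probability measure on $\mathbb{R}$ and $c_1,C>0$ constants such that a vector $X\in\mathbb{R}^d$ with i.i.d. entries from $\nu$ satisfies $\mathbb{P}(\|X\|\ge\sqrt d+t)\le Ce^{-c_1t^2}$ for $t\ge0$. Let $X_1,X_2,\dots$ be i.i.d. such vectors with law $\mu$, and $\mu_n=\frac1n\sum_{i=1}^n\delta_{X_i}$. Let $\delta>0$. Then almost surely \[ \sup_{\sigma\in[\delta,\sqrt n],\ i=1,\dots,n}\Big|\frac{\int g_\sigma(X_i,x')\,d\mu_n(x')}{\int f_\sigma(X_i,x')\,d\mu_n(x')}-\frac{\int g_\sigma(X_i,x')\,d\mu(x')}{\int f_\sigma(X_i,x')\,d\mu(x')}\Big|=O\big(n^{8/(c_1\delta^2)-1/2}\sqrt{\log n}\big). \]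
   Context: $f_\sigma(x,x')=\exp(-\|x-x'\|^2/2\sigma^2)$ and $g_\sigma(x,x')=\frac{\|x-x'\|^2}{2\sigma^2}\exp(-\|x-x'\|^2/2\sigma^2)$. *)

theory Defs
  imports "HOL-Probability.Probability"
begin

text \<open>Vectors in R^d are represented as functions nat => real, restricted to {..<d}.\<close>

definition sqdist :: "nat \<Rightarrow> (nat \<Rightarrow> real) \<Rightarrow> (nat \<Rightarrow> real) \<Rightarrow> real" where
  "sqdist d x y = (\<Sum>k<d. (x k - y k)^2)"

definition vnorm :: "nat \<Rightarrow> (nat \<Rightarrow> real) \<Rightarrow> real" where
  "vnorm d x = sqrt (\<Sum>k<d. (x k)^2)"

definition kf :: "nat \<Rightarrow> real \<Rightarrow> (nat \<Rightarrow> real) \<Rightarrow> (nat \<Rightarrow> real) \<Rightarrow> real" where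
  "kf d \<sigma> x y = exp (- sqdist d x y / (2 * \<sigma>^2))"

definition kg :: "nat \<Rightarrow> real \<Rightarrow> (nat \<Rightarrow> real) \<Rightarrow> (nat \<Rightarrow> real) \<Rightarrow> real" where
  "kg d \<sigma> x y = sqdist d x y / (2 * \<sigma>^2) * exp (- sqdist d x y / (2 * \<sigma>^2))"

definition vec_law :: "nat \<Rightarrow> real measure \<Rightarrow> (nat \<Rightarrow> real) measure" where
  "vec_law d \<nu> = PiM {..<d} (\<lambda>_. \<nu>)"

definition subgaussian :: "real measure \<Rightarrow> bool" where
  "subgaussian \<nu> \<longleftrightarrow> (\<exists>K>0. \<forall>t\<ge>0. measure \<nu> {x. \<bar>x\<bar> \<ge> t} \<le> 2 * exp (- (t^2) / K^2))"

end

theory Submission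
  imports Defs
begin

text \<open>
  Both kernels are radial, k(x, y) = h(|x - y| / sigma) with h(v) = exp(-v^2/2) resp.
  h(v) = v^2/2 exp(-v^2/2); since h' and v h'(v) are bounded, they are (4/delta)-Lipschitz in
  (x, sigma) for sigma >= delta. Uniform control over |x| <= n and sigma in [delta, sqrt n] therefore
  reduces to a grid of mesh 1/n with polynomially many points. On the grid, Hoeffding's inequality at
  level sqrt((d+2) ln n / n), together with the norm tail bound keeping all sample points within
  radius sqrt d + sqrt(3 ln n / c1), fails with probability O(n^-2); by Borel-Cantelli, almost surely
  both empirical kernel averages are eventually within O(sqrt(ln n / n)) of their means.
  On that event the population denominator is at least c n^(-3/(c1 delta^2)), because a fixed ball
  carries half of the mass of mu, and the empirical ratio is O(ln n), being an average of
  |X_i - X_j|^2 / (2 sigma^2). An elementary perturbation bound for quotients gives the rate.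
\<close>

lemma vnorm_nonneg: "0 \<le> vnorm d x"
  by (simp add: vnorm_def sum_nonneg)

lemma vnorm_eq_L2_set: "vnorm d x = L2_set x {..<d}"
  by (simp add: vnorm_def L2_set_def)

lemma vnorm_triangle: "vnorm d (x - z) \<le> vnorm d (x - y) + vnorm d (y - z)"
proof -
  have "L2_set (\<lambda>k. (x k - y k) + (y k - z k)) {..<d}
      \<le> L2_set (\<lambda>k. x k - y k) {..<d} + L2_set (\<lambda>k. y k - z k) {..<d}"
    by (rule L2_set_triangle_ineq)
  then show ?thesis by (simp add: vnorm_eq_L2_set fun_diff_def)
qed

lemma vnorm_minus_commute: "vnorm d (x - y) = vnorm d (y - x)"
  by (simp add: vnorm_def power2_commute)

lemma vnorm_diff_le: "vnorm d (x - y) \<le> vnorm d x + vnorm d y"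
proof -
  have "L2_set (\<lambda>k. x k + (- y k)) {..<d} \<le> L2_set x {..<d} + L2_set (\<lambda>k. - y k) {..<d}"
    by (rule L2_set_triangle_ineq)
  then show ?thesis by (simp add: vnorm_eq_L2_set L2_set_def)
qed

lemma abs_vnorm_diff_le: "\<bar>vnorm d (x - y) - vnorm d (x' - y)\<bar> \<le> vnorm d (x - x')"
  using vnorm_triangle[of d x y x'] vnorm_triangle[of d x' y x]
  by (simp add: abs_le_iff vnorm_minus_commute[of d x' x])

lemma abs_component_le_vnorm: "k < d \<Longrightarrow> \<bar>x k\<bar> \<le> vnorm d x"
  unfolding vnorm_def by (rule real_le_rsqrt) (auto intro: member_le_sum)

lemma sqdist_eq_vnorm: "sqdist d x y = (vnorm d (x - y))\<^sup>2"
  by (simp add: sqdist_def vnorm_def sum_nonneg)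

lemma abs_le_half_plus_half_sq: "\<bar>v\<bar> \<le> 1/2 + v\<^sup>2/2" for v :: real
proof -
  have "0 \<le> (\<bar>v\<bar> - 1)\<^sup>2" by simp
  then show ?thesis by (simp add: power2_eq_square algebra_simps)
qed

lemma abs_times_exp_neg_le:
  fixes u p c :: real
  assumes "0 \<le> u" and "\<bar>p\<bar> \<le> c * (1 + u + u\<^sup>2/2)"
  shows "\<bar>p\<bar> * exp (- u) \<le> c"
proof -
  have "0 < 1 + u + u\<^sup>2/2" using assms(1) by (simp add: add_pos_nonneg)
  then have "0 \<le> c" using assms(2) by (smt (verit) zero_le_mult_iff)
  then have "\<bar>p\<bar> \<le> c * exp u"
    using assms(2) exp_lower_Taylor_quadratic[OF assms(1)] by (meson mult_left_mono order_trans)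
  then show ?thesis by (simp add: exp_minus field_simps)
qed

lemma power2_sum_le: "(x + y)\<^sup>2 \<le> 2 * x\<^sup>2 + 2 * y\<^sup>2" for x y :: real
  using sum_squares_bound[of x y] by (simp add: power2_sum)

lemma sqrt_le_self: "1 \<le> x \<Longrightarrow> sqrt x \<le> x"
  using mult_right_mono[of 1 "sqrt x" "sqrt x"] by simp

lemma exp_neg_mult_ln: "0 < x \<Longrightarrow> exp (- (real k * ln x)) = 1 / x ^ k"
  by (simp add: exp_minus exp_of_nat_mult inverse_eq_divide)

section \<open>Radial kernels\<close>

definition radial_kernel ::
    "(real \<Rightarrow> real) \<Rightarrow> nat \<Rightarrow> real \<Rightarrow> (nat \<Rightarrow> real) \<Rightarrow> (nat \<Rightarrow> real) \<Rightarrow> real"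
  where "radial_kernel h d \<sigma> x y = h (vnorm d (x - y) / \<sigma>)"

locale kernel_profile =
  fixes h h' :: "real \<Rightarrow> real"
  assumes has_deriv: "\<And>v. (h has_real_derivative h' v) (at v)"
    and range: "\<And>v. h v \<in> {0..1}"
    and deriv_bound: "\<And>v. \<bar>h' v\<bar> \<le> 4"
    and scaled_deriv_bound: "\<And>v. \<bar>v * h' v\<bar> \<le> 4"
begin

lemma borel_measurable_profile [measurable]: "h \<in> borel_measurable borel"
  using has_deriv by (intro borel_measurable_continuous_onI DERIV_continuous_on)
    (auto intro: has_field_derivative_at_within)

lemma lipschitz: "\<bar>h a - h b\<bar> \<le> 4 * \<bar>a - b\<bar>"
  using field_differentiable_bound[of UNIV h h' 4 a b] has_deriv deriv_bound by auto

lemma lipschitz_in_scale: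
  assumes "0 < \<delta>" "\<delta> \<le> s" "\<delta> \<le> s'"
  shows "\<bar>h (r / s) - h (r / s')\<bar> \<le> 4 / \<delta> * \<bar>s - s'\<bar>"
proof -
  have deriv: "((\<lambda>s. h (r / s)) has_real_derivative - (r / z * h' (r / z)) / z) (at z within {\<delta>..})"
    if "z \<in> {\<delta>..}" for z
  proof -
    have "z \<noteq> 0" using that assms by auto
    then have "((\<lambda>s. r / s) has_real_derivative - r / z\<^sup>2) (at z)"
      by (auto intro!: derivative_eq_intros simp: power2_eq_square)
    from DERIV_chain2[OF has_deriv this] \<open>z \<noteq> 0\<close> show ?thesis
      by (auto intro: has_field_derivative_at_within simp: power2_eq_square algebra_simps)
  qed
  have bound: "norm (- (r / z * h' (r / z)) / z) \<le> 4 / \<delta>" if "z \<in> {\<delta>..}" for z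
  proof -
    have "\<bar>r / z * h' (r / z)\<bar> / z \<le> 4 / z"
      using that assms scaled_deriv_bound[of "r / z"] by (intro divide_right_mono) auto
    also have "\<dots> \<le> 4 / \<delta>" using that assms by (intro divide_left_mono) auto
    finally show ?thesis using that assms by (simp add: abs_divide)
  qed
  show ?thesis
    using field_differentiable_bound[OF convex_real_interval(1) deriv bound, of s s'] assms by simp
qed

lemma radial_kernel_lipschitz:
  assumes "0 < \<delta>" "\<delta> \<le> \<sigma>" "\<delta> \<le> \<sigma>'"
  shows "\<bar>radial_kernel h d \<sigma> x y - radial_kernel h d \<sigma>' x' y\<bar>
    \<le> 4 / \<delta> * (vnorm d (x - x') + \<bar>\<sigma> - \<sigma>'\<bar>)"
proof -
  define r r' where "r = vnorm d (x - y)" and "r' = vnorm d (x' - y)"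
  have "\<bar>h (r / \<sigma>) - h (r' / \<sigma>)\<bar> \<le> 4 * (\<bar>r - r'\<bar> / \<sigma>)"
    using lipschitz[of "r / \<sigma>" "r' / \<sigma>"] assms by (simp add: diff_divide_distrib[symmetric] abs_divide)
  also have "\<dots> \<le> 4 / \<delta> * vnorm d (x - x')"
    using abs_vnorm_diff_le[of d x y x'] assms unfolding r_def r'_def
    by (simp add: frac_le)
  finally have "\<bar>h (r / \<sigma>) - h (r' / \<sigma>)\<bar> \<le> 4 / \<delta> * vnorm d (x - x')" .
  moreover have "\<bar>h (r' / \<sigma>) - h (r' / \<sigma>')\<bar> \<le> 4 / \<delta> * \<bar>\<sigma> - \<sigma>'\<bar>"
    by (rule lipschitz_in_scale[OF assms])
  ultimately show ?thesis
    unfolding radial_kernel_def r_def[symmetric] r'_def[symmetric] by (simp add: distrib_left)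
qed

end

definition kf_profile :: "real \<Rightarrow> real" where "kf_profile v = exp (- (v\<^sup>2/2))"

definition kg_profile :: "real \<Rightarrow> real" where "kg_profile v = v\<^sup>2/2 * exp (- (v\<^sup>2/2))"

lemma kf_eq_radial_kernel: "kf d = radial_kernel kf_profile d"
  by (simp add: fun_eq_iff kf_def radial_kernel_def kf_profile_def sqdist_eq_vnorm power_divide)

lemma kg_eq_radial_kernel: "kg d = radial_kernel kg_profile d"
  by (simp add: fun_eq_iff kg_def radial_kernel_def kg_profile_def sqdist_eq_vnorm power_divide mult.commute)

interpretation kf_profile: kernel_profile kf_profile "\<lambda>v. - v * exp (- (v\<^sup>2/2))"
proof
  fix v :: real
  define u where "u = v\<^sup>2/2"
  have u: "0 \<le> u" by (simp add: u_def)
  show "(kf_profile has_real_derivative - v * exp (- (v\<^sup>2/2))) (at v)"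
    unfolding kf_profile_def by (auto intro!: derivative_eq_intros)
  show "kf_profile v \<in> {0..1}" by (simp add: kf_profile_def)
  have "\<bar>- v\<bar> \<le> 1/2 + u" using abs_le_half_plus_half_sq[of v] unfolding u_def by simp
  also have "\<dots> \<le> 4 * (1 + u + u\<^sup>2/2)" using u by (simp add: algebra_simps add_increasing2)
  finally have "\<bar>- v\<bar> * exp (- u) \<le> 4" by (rule abs_times_exp_neg_le[OF u])
  then show "\<bar>- v * exp (- (v\<^sup>2/2))\<bar> \<le> 4" by (simp add: u_def abs_mult)
  have "\<bar>v * - v\<bar> = 2 * u" by (simp add: u_def power2_eq_square)
  also have "\<dots> \<le> 4 * (1 + u + u\<^sup>2/2)" using u by (simp add: algebra_simps add_increasing2)
  finally have "\<bar>v * - v\<bar> * exp (- u) \<le> 4" by (rule abs_times_exp_neg_le[OF u])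
  then show "\<bar>v * (- v * exp (- (v\<^sup>2/2)))\<bar> \<le> 4" by (simp add: u_def abs_mult)
qed

interpretation kg_profile: kernel_profile kg_profile "\<lambda>v. v * (1 - v\<^sup>2/2) * exp (- (v\<^sup>2/2))"
proof
  fix v :: real
  define u where "u = v\<^sup>2/2"
  have u: "0 \<le> u" by (simp add: u_def)
  show "(kg_profile has_real_derivative v * (1 - v\<^sup>2/2) * exp (- (v\<^sup>2/2))) (at v)"
    unfolding kg_profile_def
    by (auto intro!: derivative_eq_intros simp: power2_eq_square field_simps)
  have "\<bar>u\<bar> * exp (- u) \<le> 1"
    using u by (intro abs_times_exp_neg_le) (simp_all add: algebra_simps add_increasing2)
  then show "kg_profile v \<in> {0..1}" using u by (simp add: kg_profile_def u_def)
  have "\<bar>v * (1 - u)\<bar> \<le> (1/2 + u) * (1 + u)"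
    using abs_le_half_plus_half_sq[of v] u unfolding abs_mult u_def[symmetric]
    by (intro mult_mono) auto
  also have "\<dots> \<le> 4 * (1 + u + u\<^sup>2/2)"
    using u by (simp add: algebra_simps power2_eq_square add_increasing2)
  finally have "\<bar>v * (1 - u)\<bar> * exp (- u) \<le> 4" by (rule abs_times_exp_neg_le[OF u])
  then show "\<bar>v * (1 - v\<^sup>2/2) * exp (- (v\<^sup>2/2))\<bar> \<le> 4" by (simp add: u_def abs_mult)
  have "\<bar>v * (v * (1 - u))\<bar> = 2 * u * \<bar>1 - u\<bar>" using u unfolding u_def by (simp add: abs_mult power2_eq_square)
  also have "\<dots> \<le> 4 * (1 + u + u\<^sup>2/2)"
    using u by (simp add: abs_if algebra_simps power2_eq_square add_increasing2)
  finally have "\<bar>v * (v * (1 - u))\<bar> * exp (- u) \<le> 4" by (rule abs_times_exp_neg_le[OF u])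
  then show "\<bar>v * (v * (1 - v\<^sup>2/2) * exp (- (v\<^sup>2/2)))\<bar> \<le> 4" by (simp add: u_def abs_mult)
qed

lemma kg_eq_kf: "kg d \<sigma> x y = sqdist d x y / (2 * \<sigma>\<^sup>2) * kf d \<sigma> x y"
  by (simp add: kg_def kf_def)

lemma sum_kg_le_sum_kf:
  assumes "\<And>j. j \<in> J \<Longrightarrow> vnorm d (Y j) \<le> R" "vnorm d x \<le> R" "0 < \<delta>" "\<delta> \<le> \<sigma>"
  shows "(\<Sum>j\<in>J. kg d \<sigma> x (Y j)) \<le> 2 * R\<^sup>2 / \<delta>\<^sup>2 * (\<Sum>j\<in>J. kf d \<sigma> x (Y j))"
  unfolding sum_distrib_left
proof (intro sum_mono)
  fix j assume "j \<in> J"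
  have "vnorm d (x - Y j) \<le> 2 * R" using vnorm_diff_le[of d x "Y j"] assms \<open>j \<in> J\<close> by fastforce
  then have "sqdist d x (Y j) \<le> (2 * R)\<^sup>2" unfolding sqdist_eq_vnorm by (intro power_mono vnorm_nonneg)
  then have "sqdist d x (Y j) / (2 * \<sigma>\<^sup>2) \<le> (2 * R)\<^sup>2 / (2 * \<delta>\<^sup>2)"
    using assms by (intro frac_le mult_left_mono power_mono) auto
  then show "kg d \<sigma> x (Y j) \<le> 2 * R\<^sup>2 / \<delta>\<^sup>2 * kf d \<sigma> x (Y j)"
    unfolding kg_eq_kf by (intro mult_right_mono) (auto simp: kf_def power_mult_distrib)
qed

section \<open>Grids\<close>

definition scale_grid :: "real \<Rightarrow> nat \<Rightarrow> real set"
  where "scale_grid \<delta> n = (\<lambda>k. \<delta> + real k / real n) ` {0..n * n}"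

definition coord_grid :: "nat \<Rightarrow> real set"
  where "coord_grid n = (\<lambda>k. of_int k / real n) ` {- int (n * n)..int (n * n)}"

definition point_grid :: "nat \<Rightarrow> nat \<Rightarrow> (nat \<Rightarrow> real) set"
  where "point_grid d n = PiE {..<d} (\<lambda>_. coord_grid n)"

lemma finite_scale_grid: "finite (scale_grid \<delta> n)"
  by (simp add: scale_grid_def)

lemma finite_point_grid: "finite (point_grid d n)"
  by (simp add: point_grid_def coord_grid_def finite_PiE)

lemma card_grid_le:
  assumes "1 \<le> n"
  shows "card (point_grid d n \<times> scale_grid \<delta> n) \<le> 2 * 3 ^ d * (n\<^sup>2) ^ (d + 1)"
proof -
  have "card {- int (n * n)..int (n * n)} = 2 * n\<^sup>2 + 1"
    by (simp add: power2_eq_square nat_add_distrib nat_mult_distrib)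
  then have "card (coord_grid n) \<le> 2 * n\<^sup>2 + 1"
    unfolding coord_grid_def by (metis card_image_le finite_atLeastAtMost_int)
  also have "\<dots> \<le> 3 * n\<^sup>2" using assms by simp
  finally have "card (coord_grid n) ^ d \<le> (3 * n\<^sup>2) ^ d" by (rule power_mono) simp
  then have coord: "card (point_grid d n) \<le> (3 * n\<^sup>2) ^ d" by (simp add: point_grid_def card_PiE)
  have "card (scale_grid \<delta> n) \<le> n\<^sup>2 + 1"
    using card_image_le[of "{0..n * n}" "\<lambda>k. \<delta> + real k / real n"] by (simp add: scale_grid_def power2_eq_square)
  also have "\<dots> \<le> 2 * n\<^sup>2" using assms by simp
  finally have "card (point_grid d n \<times> scale_grid \<delta> n) \<le> (3 * n\<^sup>2) ^ d * (2 * n\<^sup>2)"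
    using coord by (simp add: card_cartesian_product mult_mono)
  also have "\<dots> = 2 * 3 ^ d * (n\<^sup>2) ^ (d + 1)"
    by (simp only: power_mult_distrib power_Suc2 Suc_eq_plus1[symmetric] mult_ac)
  finally show ?thesis .
qed

lemma scale_grid_approx:
  assumes "1 \<le> n" "\<delta> \<le> \<sigma>" "\<sigma> \<le> \<delta> + real n"
  obtains \<sigma>' where "\<sigma>' \<in> scale_grid \<delta> n" "\<delta> \<le> \<sigma>'" "\<bar>\<sigma> - \<sigma>'\<bar> \<le> 1 / real n"
proof
  define k where "k = nat \<lfloor>(\<sigma> - \<delta>) * real n\<rfloor>"
  have n: "0 < real n" using assms by simp
  have "real k = of_int \<lfloor>(\<sigma> - \<delta>) * real n\<rfloor>" using assms by (simp add: k_def)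
  then have k: "real k \<le> (\<sigma> - \<delta>) * real n" "(\<sigma> - \<delta>) * real n < real k + 1" by linarith+
  have "(\<sigma> - \<delta>) * real n \<le> real n * real n" using assms by (intro mult_right_mono) auto
  then have "k \<le> n * n" using k by (simp flip: of_nat_mult)
  then show "\<delta> + real k / real n \<in> scale_grid \<delta> n" by (auto simp: scale_grid_def)
  show "\<delta> \<le> \<delta> + real k / real n" by simp
  have "\<sigma> - (\<delta> + real k / real n) = ((\<sigma> - \<delta>) * real n - real k) / real n"
    using n by (simp add: field_simps)
  then show "\<bar>\<sigma> - (\<delta> + real k / real n)\<bar> \<le> 1 / real n"
    using k n by (simp add: divide_right_mono)
qed

lemma point_grid_approx:
  assumes "1 \<le> n" "vnorm d x \<le> real n"
  obtains x' where "x' \<in> point_grid d n" "vnorm d (x - x') \<le> sqrt (real d) / real n"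
proof
  define x' where "x' = restrict (\<lambda>k. of_int \<lfloor>x k * real n\<rfloor> / real n) {..<d}"
  have n: "0 < real n" using assms by simp
  have "of_int \<lfloor>x k * real n\<rfloor> / real n \<in> coord_grid n" if "k < d" for k
  proof -
    have "\<bar>x k * real n\<bar> \<le> real n * real n"
      using abs_component_le_vnorm[OF that, of x] assms by (simp add: abs_mult mult_right_mono)
    then have "\<lfloor>x k * real n\<rfloor> \<in> {- int (n * n)..int (n * n)}"
      by (auto simp: abs_le_iff le_floor_iff floor_le_iff)
    then show ?thesis unfolding coord_grid_def by blast
  qed
  then show "x' \<in> point_grid d n" by (simp add: point_grid_def x'_def)
  have "(x k - x' k)\<^sup>2 \<le> (1 / real n)\<^sup>2" if "k < d" for k
  proof (intro power_mono)
    have "x k - x' k = (x k * real n - of_int \<lfloor>x k * real n\<rfloor>) / real n"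
      using that n by (simp add: x'_def field_simps)
    moreover have "0 \<le> x k * real n - of_int \<lfloor>x k * real n\<rfloor>" "x k * real n - of_int \<lfloor>x k * real n\<rfloor> \<le> 1"
      by linarith+
    ultimately show "x k - x' k \<le> 1 / real n" "0 \<le> x k - x' k"
      using n by (simp_all add: divide_right_mono)
  qed
  then have "vnorm d (x - x') \<le> sqrt (\<Sum>k<d. (1 / real n)\<^sup>2)"
    unfolding vnorm_def minus_apply by (intro real_sqrt_le_mono sum_mono) auto
  also have "\<dots> = sqrt (real d) / real n" by (simp add: real_sqrt_mult)
  finally show "vnorm d (x - x') \<le> sqrt (real d) / real n" .
qed

lemma (in prob_space) abs_integral_diff_le:
  fixes f g :: "'a \<Rightarrow> real"
  assumes "integrable M f" "integrable M g" "\<And>y. y \<in> space M \<Longrightarrow> \<bar>f y - g y\<bar> \<le> c"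
  shows "\<bar>(\<integral>y. f y \<partial>M) - (\<integral>y. g y \<partial>M)\<bar> \<le> c"
proof -
  have "\<bar>(\<integral>y. f y \<partial>M) - (\<integral>y. g y \<partial>M)\<bar> = \<bar>\<integral>y. f y - g y \<partial>M\<bar>" using assms by simp
  also have "\<dots> \<le> (\<integral>y. \<bar>f y - g y\<bar> \<partial>M)" by (rule integral_abs_bound)
  also have "\<dots> \<le> c" using assms by (intro integral_le_const AE_I2) auto
  finally show ?thesis .
qed

locale vector_distribution = prob_space \<mu> for \<mu> :: "(nat \<Rightarrow> real) measure" +
  fixes d :: nat
  assumes sets_eq_PiM: "sets \<mu> = sets (PiM {..<d} (\<lambda>_. borel))"
begin

lemma measurable_component: "k < d \<Longrightarrow> (\<lambda>y. y k) \<in> borel_measurable \<mu>"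
  using measurable_component_singleton[of k "{..<d}" "\<lambda>_. borel"]
  by (simp add: measurable_cong_sets[OF sets_eq_PiM refl])

lemma measurable_vnorm_diff [measurable]: "(\<lambda>y. vnorm d (x - y)) \<in> borel_measurable \<mu>"
proof -
  have [measurable]: "(\<lambda>y. \<Sum>k<d. (x k - y k)\<^sup>2) \<in> borel_measurable \<mu>"
    by (intro borel_measurable_sum borel_measurable_power borel_measurable_diff measurable_component) auto
  show ?thesis unfolding vnorm_def minus_apply by measurable
qed

lemma measurable_vnorm [measurable]: "vnorm d \<in> borel_measurable \<mu>"
proof -
  have [measurable]: "(\<lambda>y. \<Sum>k<d. (y k)\<^sup>2) \<in> borel_measurable \<mu>"
    by (intro borel_measurable_sum borel_measurable_power measurable_component) auto
  show ?thesis unfolding vnorm_def by measurable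
qed

context
  fixes h h' assumes profile: "kernel_profile h h'"
begin

interpretation kernel_profile h h' by (rule profile)

lemma measurable_radial_kernel [measurable]: "radial_kernel h d \<sigma> x \<in> borel_measurable \<mu>"
  unfolding radial_kernel_def by measurable

lemma integrable_radial_kernel: "integrable \<mu> (radial_kernel h d \<sigma> x)"
  using range by (intro integrable_const_bound[where B=1]) (auto simp: radial_kernel_def)

lemma integral_radial_kernel_nonneg: "0 \<le> (\<integral>y. radial_kernel h d \<sigma> x y \<partial>\<mu>)"
  using range by (intro integral_nonneg_AE) (auto simp: radial_kernel_def)

lemma integral_radial_kernel_le_1: "(\<integral>y. radial_kernel h d \<sigma> x y \<partial>\<mu>) \<le> 1"
  using range by (intro integral_le_const integrable_radial_kernel) (auto simp: radial_kernel_def)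

lemma integral_radial_kernel_lipschitz:
  assumes "0 < \<delta>" "\<delta> \<le> \<sigma>" "\<delta> \<le> \<sigma>'"
  shows "\<bar>(\<integral>y. radial_kernel h d \<sigma> x y \<partial>\<mu>) - (\<integral>y. radial_kernel h d \<sigma>' x' y \<partial>\<mu>)\<bar>
    \<le> 4 / \<delta> * (vnorm d (x - x') + \<bar>\<sigma> - \<sigma>'\<bar>)"
  by (intro abs_integral_diff_le integrable_radial_kernel radial_kernel_lipschitz assms)

lemma uniform_deviation_from_grid:
  fixes Y :: "nat \<Rightarrow> nat \<Rightarrow> real"
  assumes grid: "\<And>x' \<sigma>'. x' \<in> point_grid d n \<Longrightarrow> \<sigma>' \<in> scale_grid \<delta> n \<Longrightarrow>
      \<bar>(\<Sum>j=1..n. radial_kernel h d \<sigma>' x' (Y j)) / real n - (\<integral>y. radial_kernel h d \<sigma>' x' y \<partial>\<mu>)\<bar> < t"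
    and "1 \<le> n" "0 < \<delta>" "vnorm d x \<le> real n" "\<delta> \<le> \<sigma>" "\<sigma> \<le> \<delta> + real n"
  shows "\<bar>(\<Sum>j=1..n. radial_kernel h d \<sigma> x (Y j)) / real n - (\<integral>y. radial_kernel h d \<sigma> x y \<partial>\<mu>)\<bar>
    \<le> t + 8 / \<delta> * (sqrt (real d) + 1) / real n"
proof -
  have n: "0 < real n" using assms by simp
  obtain x' where x': "x' \<in> point_grid d n" "vnorm d (x - x') \<le> sqrt (real d) / real n"
    using point_grid_approx assms by blast
  obtain \<sigma>' where \<sigma>': "\<sigma>' \<in> scale_grid \<delta> n" "\<delta> \<le> \<sigma>'" "\<bar>\<sigma> - \<sigma>'\<bar> \<le> 1 / real n"
    using scale_grid_approx assms by blast
  define D where "D = 4 / \<delta> * (sqrt (real d) + 1) / real n"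
  have close: "4 / \<delta> * (vnorm d (x - x') + \<bar>\<sigma> - \<sigma>'\<bar>) \<le> D"
  proof -
    have "vnorm d (x - x') + \<bar>\<sigma> - \<sigma>'\<bar> \<le> (sqrt (real d) + 1) / real n"
      using x' \<sigma>' by (simp add: add_divide_distrib)
    then have "4 / \<delta> * (vnorm d (x - x') + \<bar>\<sigma> - \<sigma>'\<bar>) \<le> 4 / \<delta> * ((sqrt (real d) + 1) / real n)"
      using assms by (intro mult_left_mono) auto
    then show ?thesis by (simp add: D_def)
  qed
  have "\<bar>(\<Sum>j=1..n. radial_kernel h d \<sigma> x (Y j)) / real n - (\<Sum>j=1..n. radial_kernel h d \<sigma>' x' (Y j)) / real n\<bar>
      \<le> (\<Sum>j=1..n. \<bar>radial_kernel h d \<sigma> x (Y j) - radial_kernel h d \<sigma>' x' (Y j)\<bar>) / real n"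
    using n by (simp add: diff_divide_distrib[symmetric] abs_divide divide_right_mono sum_abs
        flip: sum_subtractf)
  also have "\<dots> \<le> (\<Sum>j=1..n. D) / real n"
    using assms \<sigma>' by (intro divide_right_mono sum_mono order.trans[OF radial_kernel_lipschitz close]) auto
  also have "\<dots> = D" using n by simp
  finally have "\<bar>(\<Sum>j=1..n. radial_kernel h d \<sigma> x (Y j)) / real n
      - (\<Sum>j=1..n. radial_kernel h d \<sigma>' x' (Y j)) / real n\<bar> \<le> D" .
  moreover have "\<bar>(\<integral>y. radial_kernel h d \<sigma> x y \<partial>\<mu>) - (\<integral>y. radial_kernel h d \<sigma>' x' y \<partial>\<mu>)\<bar> \<le> D"
    using assms \<sigma>' by (intro order.trans[OF integral_radial_kernel_lipschitz close])
  moreover have "8 / \<delta> * (sqrt (real d) + 1) / real n = 2 * D" by (simp add: D_def)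
  ultimately show ?thesis using grid[OF x'(1) \<sigma>'(1)] by linarith
qed

end

lemma integral_kf_lower_bound:
  assumes "0 < \<delta>" "\<delta> \<le> \<sigma>" "0 \<le> r" and half: "prob {y \<in> space \<mu>. r \<le> vnorm d y} \<le> 1/2"
  shows "exp (- ((vnorm d x + r)\<^sup>2 / (2 * \<delta>\<^sup>2))) / 2 \<le> (\<integral>y. kf d \<sigma> x y \<partial>\<mu>)"
proof -
  define c where "c = exp (- ((vnorm d x + r)\<^sup>2 / (2 * \<delta>\<^sup>2)))"
  define A where "A = {y \<in> space \<mu>. vnorm d y < r}"
  have A: "A \<in> events" unfolding A_def by measurable
  have below_kf: "indicator A y * c \<le> kf d \<sigma> x y" for y
  proof (cases "y \<in> A")
    case True
    then have "vnorm d (x - y) \<le> vnorm d x + r"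
      using vnorm_diff_le[of d x y] by (auto simp: A_def)
    then have "sqdist d x y \<le> (vnorm d x + r)\<^sup>2"
      unfolding sqdist_eq_vnorm by (intro power_mono) (auto simp: vnorm_nonneg)
    then have "sqdist d x y / (2 * \<sigma>\<^sup>2) \<le> (vnorm d x + r)\<^sup>2 / (2 * \<delta>\<^sup>2)"
      using assms by (intro frac_le mult_left_mono power_mono) auto
    then show ?thesis using True by (simp add: c_def kf_def)
  qed (simp add: kf_def)
  have "space \<mu> - {y \<in> space \<mu>. r \<le> vnorm d y} = A" by (auto simp: A_def)
  then have "1/2 \<le> prob A" using prob_compl[of "{y \<in> space \<mu>. r \<le> vnorm d y}"] half by simp
  then have "c / 2 \<le> (\<integral>y. indicator A y * c \<partial>\<mu>)" using A by (simp add: c_def)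
  also have "\<dots> \<le> (\<integral>y. kf d \<sigma> x y \<partial>\<mu>)"
    using A below_kf integrable_radial_kernel[OF kf_profile.kernel_profile_axioms]
    by (intro integral_mono integrable_mult_left integrable_real_indicator)
      (auto simp: kf_eq_radial_kernel less_top[symmetric])
  finally show ?thesis unfolding c_def .
qed

end

section \<open>Perturbation of quotients\<close>

lemma ratio_perturbation:
  fixes Fn Gn F G e S :: real
  assumes Fn: "0 < Fn" and Gn: "0 \<le> Gn" "Gn \<le> S * Fn" and F: "0 < F" "F \<le> 1" and G: "0 \<le> G" "G \<le> 1"
    and dF: "\<bar>Fn - F\<bar> \<le> e" and dG: "\<bar>Gn - G\<bar> \<le> e"
  shows "\<bar>Gn / Fn - G / F\<bar> \<le> 2 * e * (S + 3 / F) / F"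
proof -
  have "0 \<le> S * Fn" using Gn by linarith
  then have S: "0 \<le> S" using Fn by (simp add: zero_le_mult_iff)
  show ?thesis
  proof (cases "2 * e \<le> F")
    case True
    have "\<bar>Gn / Fn - G / F\<bar> = \<bar>(Gn - G) * F + G * (F - Fn)\<bar> / (F * Fn)"
      using Fn F by (simp add: field_simps)
    also have "\<dots> \<le> 2 * e / (F * (F / 2))"
    proof (rule frac_le)
      have "\<bar>(Gn - G) * F + G * (F - Fn)\<bar> \<le> \<bar>Gn - G\<bar> * F + G * \<bar>F - Fn\<bar>"
        using F G by (metis abs_mult abs_of_nonneg abs_triangle_ineq less_imp_le)
      also have "\<dots> \<le> e * 1 + 1 * e"
        using dF dG F G by (intro add_mono mult_mono) (auto simp: abs_minus_commute)
      finally show "\<bar>(Gn - G) * F + G * (F - Fn)\<bar> \<le> 2 * e" by simp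
      show "F * (F / 2) \<le> F * Fn" using True dF F by (intro mult_left_mono) auto
    qed (use F dF in auto)
    also have "\<dots> = 2 * e * (2 / F) / F" using F by (simp add: field_simps)
    also have "\<dots> \<le> 2 * e * (S + 3 / F) / F"
      using F S dF divide_right_mono[of 2 3 F] by (intro divide_right_mono mult_left_mono) auto
    finally show ?thesis .
  next
    case False
    \<comment> \<open>then 2 e / F > 1, so the crude bound S + 1 / F suffices\<close>
    have "Gn / Fn \<le> S" "G / F \<le> 1 / F" using Gn Fn F G by (simp_all add: divide_le_eq divide_right_mono)
    moreover have "0 \<le> Gn / Fn" "0 \<le> G / F" using Gn Fn F G by simp_all
    ultimately have "\<bar>Gn / Fn - G / F\<bar> \<le> (S + 3 / F) * 1" using F by (simp add: abs_le_iff)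
    also have "\<dots> \<le> (S + 3 / F) * (2 * e / F)" using False F S by (intro mult_left_mono) auto
    finally show ?thesis by (simp add: ac_simps)
  qed
qed

text \<open>The logarithmic growth of S is absorbed into N^(5q); together with the factor N^(3q) coming
  from 1 / F this produces the exponent 8q.\<close>

lemma ratio_error_rate:
  fixes N e F S c0 K1 a b q :: real
  assumes N: "1 \<le> N" and q: "0 < q" and c0: "0 < c0" and ab: "0 \<le> a" "0 \<le> b"
    and e: "0 \<le> e" "e \<le> K1 * sqrt (ln N) / sqrt N"
    and F: "c0 * N powr (- 3 * q) \<le> F"
    and S: "0 \<le> S" "S \<le> a + b * ln N"
  shows "2 * e * (S + 3 / F) / F \<le> 2 * K1 * (a + b / (5 * q) + 3 / c0) / c0 * (N powr (8 * q - 1/2) * sqrt (ln N))"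
proof -
  have "0 < c0 * N powr (- 3 * q)" using c0 N by simp
  then have F_pos: "0 < F" using F by linarith
  have "1 / F \<le> 1 / (c0 * N powr (- 3 * q))"
    using F F_pos \<open>0 < c0 * N powr (- 3 * q)\<close> by (intro divide_left_mono) auto
  also have "1 / (c0 * N powr (- 3 * q)) = N powr (3 * q) / c0" using N c0 by (simp add: powr_minus field_simps)
  finally have F_inv: "1 / F \<le> N powr (3 * q) / c0" .
  define P where "P = N powr (5 * q)"
  have "K1 * sqrt (ln N) / sqrt N = K1 * sqrt (ln N) * N powr (-1/2)"
    using N by (simp add: powr_minus_divide powr_half_sqrt)
  then have e_powr: "e \<le> K1 * sqrt (ln N) * N powr (-1/2)" using e by simp
  have "1 \<le> P" using N q by (simp add: P_def ge_one_powr_ge_zero)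
  have "N powr (3 * q) \<le> P" unfolding P_def using N q by (intro powr_mono) auto
  have "ln N \<le> P / (5 * q)" using ln_powr_bound[OF N, of "5 * q"] q by (simp add: P_def)
  then have "b * ln N \<le> b * (P / (5 * q))" using ab by (intro mult_left_mono)
  moreover have "a * 1 \<le> a * P" using ab \<open>1 \<le> P\<close> by (intro mult_left_mono)
  ultimately have "S \<le> a * P + b * (P / (5 * q))" using S(2) by linarith
  moreover have "1 / F \<le> P / c0"
    using F_inv \<open>N powr (3 * q) \<le> P\<close> c0 by (meson divide_right_mono less_imp_le order_trans)
  then have "3 / F \<le> 3 / c0 * P" by simp
  ultimately have SF: "S + 3 / F \<le> (a + b / (5 * q) + 3 / c0) * P" by (simp add: algebra_simps)
  have "2 * e * (S + 3 / F) / F = 2 * e * (S + 3 / F) * (1 / F)" by simp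
  also have "\<dots> \<le> 2 * (K1 * sqrt (ln N) * N powr (-1/2)) * ((a + b / (5 * q) + 3 / c0) * P) * (N powr (3 * q) / c0)"
  proof (intro mult_mono)
    have "0 \<le> K1 * sqrt (ln N) * N powr (-1/2)" using e e_powr by linarith
    moreover have "0 \<le> (a + b / (5 * q) + 3 / c0) * P" using ab q c0 \<open>1 \<le> P\<close> by simp
    ultimately show "0 \<le> 2 * (K1 * sqrt (ln N) * N powr (-1/2)) * ((a + b / (5 * q) + 3 / c0) * P)"
      by simp
  qed (use e e_powr F_pos F_inv S SF in auto)
  also have "\<dots> = 2 * K1 * (a + b / (5 * q) + 3 / c0) / c0 * (N powr (-1/2) * P * N powr (3 * q) * sqrt (ln N))"
    by (simp add: field_simps)
  also have "N powr (-1/2) * P * N powr (3 * q) = N powr (8 * q - 1/2)"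
    by (simp add: P_def flip: powr_add)
  finally show ?thesis .
qed

section \<open>Random samples\<close>

lemma (in prob_space) borel_cantelli_inverse_square:
  assumes "\<And>n. A n \<in> events" and "\<And>n. 1 \<le> n \<Longrightarrow> prob (A n) \<le> c / real n ^ 2"
  shows "AE \<omega> in M. eventually (\<lambda>n. \<omega> \<notin> A n) sequentially"
proof -
  have "summable (\<lambda>n. c * inverse (real n ^ 2))"
    by (intro summable_mult inverse_power_summable) auto
  then have "summable (\<lambda>n. prob (A n))"
    by (rule summable_comparison_test'[where N = 1]) (use assms(2) in \<open>simp add: divide_inverse\<close>)
  then have "AE \<omega> in M. eventually (\<lambda>n. \<omega> \<in> space M - A n) sequentially"
    using assms(1) by (intro borel_cantelli_AE1) (auto simp: less_top[symmetric])
  then show ?thesis by (auto elim: eventually_mono)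
qed

locale iid_sample = prob_space M + law: vector_distribution \<mu> d
  for M :: "'a measure" and \<mu> :: "(nat \<Rightarrow> real) measure" and d :: nat +
  fixes X :: "nat \<Rightarrow> 'a \<Rightarrow> nat \<Rightarrow> real"
  assumes indep_sample: "indep_vars (\<lambda>_. \<mu>) X UNIV"
    and distr_sample: "\<And>i. distr M \<mu> (X i) = \<mu>"
begin

lemma measurable_sample [measurable]: "X i \<in> M \<rightarrow>\<^sub>M \<mu>"
  using indep_sample unfolding indep_vars_def2 by auto

definition deviation_event :: "((nat \<Rightarrow> real) \<Rightarrow> real) \<Rightarrow> nat \<Rightarrow> real \<Rightarrow> 'a set" where
  "deviation_event f n t = {\<omega> \<in> space M. t \<le> \<bar>(\<Sum>j=1..n. f (X j \<omega>)) / real n - (\<integral>y. f y \<partial>\<mu>)\<bar>}"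

lemma deviation_event_in_events:
  assumes [measurable]: "f \<in> borel_measurable \<mu>"
  shows "deviation_event f n t \<in> events"
  unfolding deviation_event_def by measurable

lemma prob_deviation_event_le:
  assumes [measurable]: "f \<in> borel_measurable \<mu>"
    and "\<And>y. f y \<in> {0..1}" "1 \<le> n" "0 \<le> t"
  shows "prob (deviation_event f n t) \<le> 2 * exp (- 2 * real n * t\<^sup>2)"
proof -
  have "distr M borel (\<lambda>\<omega>. f (X i \<omega>)) = distr \<mu> borel f" for i
    using distr_distr[of f \<mu> borel "X i" M] distr_sample by (simp add: comp_def)
  then have "Hoeffding_ineq_iid M {1..n} (\<lambda>j \<omega>. f (X j \<omega>)) (\<lambda>\<omega>. f (X 1 \<omega>)) 0 1"
    using assms(2) unfolding Hoeffding_ineq_iid_def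
    by unfold_locales (auto intro: indep_vars_compose2[OF indep_vars_subset[OF indep_sample]])
  from Hoeffding_ineq_iid.Hoeffding_ineq_abs_ge'[OF this \<open>0 \<le> t\<close>]
  have "prob {\<omega> \<in> space M. t \<le> \<bar>(\<Sum>j=1..n. f (X j \<omega>)) / real n - expectation (\<lambda>\<omega>. f (X 1 \<omega>))\<bar>}
      \<le> 2 * exp (- 2 * real n * t\<^sup>2)"
    using assms(3) by simp
  moreover have "expectation (\<lambda>\<omega>. f (X 1 \<omega>)) = (\<integral>y. f y \<partial>\<mu>)"
    using integral_distr[of "X 1" M \<mu> f] distr_sample by simp
  ultimately show ?thesis by (simp add: deviation_event_def)
qed

lemma prob_sample_norm_ge:
  "prob {\<omega> \<in> space M. r \<le> vnorm d (X i \<omega>)} = law.prob {y \<in> space \<mu>. r \<le> vnorm d y}"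
proof -
  have "{\<omega> \<in> space M. r \<le> vnorm d (X i \<omega>)} = X i -` {y \<in> space \<mu>. r \<le> vnorm d y} \<inter> space M"
    using measurable_space[OF measurable_sample] by auto
  then show ?thesis
    using measure_distr[of "X i" M \<mu> "{y \<in> space \<mu>. r \<le> vnorm d y}"] distr_sample by simp
qed

definition kernel_ratio_error :: "real \<Rightarrow> nat \<Rightarrow> nat \<Rightarrow> 'a \<Rightarrow> real" where
  "kernel_ratio_error \<sigma> n i \<omega> =
     \<bar>((1 / real n) * (\<Sum>j=1..n. kg d \<sigma> (X i \<omega>) (X j \<omega>)))
        / ((1 / real n) * (\<Sum>j=1..n. kf d \<sigma> (X i \<omega>) (X j \<omega>)))
      - (\<integral>x'. kg d \<sigma> (X i \<omega>) x' \<partial>\<mu>) / (\<integral>x'. kf d \<sigma> (X i \<omega>) x' \<partial>\<mu>)\<bar>"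

end

text \<open>At this level Hoeffding's bound is 2 n^-(2d+4), which stays summable after a union bound over
  the O(3^d n^(2d+2)) points of the grid.\<close>

definition deviation_level :: "nat \<Rightarrow> nat \<Rightarrow> real"
  where "deviation_level d n = sqrt ((real d + 2) * ln (real n) / real n)"

lemma exp_deviation_level:
  assumes "1 \<le> n"
  shows "exp (- 2 * real n * (deviation_level d n)\<^sup>2) = 1 / (real n ^ 2) ^ (d + 2)"
proof -
  have "- 2 * real n * (deviation_level d n)\<^sup>2 = - (real (2 * (d + 2)) * ln (real n))"
    using assms by (simp add: deviation_level_def)
  then have "exp (- 2 * real n * (deviation_level d n)\<^sup>2) = 1 / real n ^ (2 * (d + 2))"
    using assms by (simp only: exp_neg_mult_ln of_nat_0_less_iff)
  then show ?thesis by (simp only: power_mult)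
qed

lemma deviation_rate:
  assumes "3 \<le> n" "0 \<le> L"
  shows "deviation_level d n + L * (sqrt (real d) + 1) / real n
    \<le> (sqrt (real d + 2) + L * (sqrt (real d) + 1)) * sqrt (ln (real n)) / sqrt (real n)"
proof -
  have "1 \<le> ln (real n)" using assms exp_le by (subst ln_ge_iff) auto
  have "1 / real n \<le> 1 / sqrt (real n)" using assms sqrt_le_self[of "real n"] by (intro divide_left_mono) auto
  also have "\<dots> \<le> sqrt (ln (real n)) / sqrt (real n)"
    using \<open>1 \<le> ln (real n)\<close> by (intro divide_right_mono) auto
  finally have "L * (sqrt (real d) + 1) * (1 / real n) \<le> L * (sqrt (real d) + 1) * (sqrt (ln (real n)) / sqrt (real n))"
    using assms by (intro mult_left_mono) auto
  moreover have "deviation_level d n = sqrt (real d + 2) * sqrt (ln (real n)) / sqrt (real n)"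
    by (simp add: deviation_level_def real_sqrt_mult real_sqrt_divide)
  ultimately show ?thesis by (simp add: distrib_right add_divide_distrib)
qed

locale norm_concentrated_sample = iid_sample +
  fixes c1 C :: real
  assumes c1_pos: "0 < c1" and C_pos: "0 < C"
    and norm_tail: "\<And>t. 0 \<le> t \<Longrightarrow>
      law.prob {y \<in> space \<mu>. sqrt (real d) + t \<le> vnorm d y} \<le> C * exp (- (c1 * t\<^sup>2))"
begin

text \<open>By the norm tail bound, each sample point lies beyond this radius with probability at most
  C / n^3.\<close>

definition sample_radius :: "nat \<Rightarrow> real"
  where "sample_radius n = sqrt (real d) + sqrt (3 * ln (real n) / c1)"

definition large_sample_event :: "nat \<Rightarrow> 'a set" where
  "large_sample_event n = (\<Union>i\<in>{1..n}. {\<omega> \<in> space M. sample_radius n \<le> vnorm d (X i \<omega>)})"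

definition grid_deviation_event :: "(real \<Rightarrow> real) \<Rightarrow> real \<Rightarrow> nat \<Rightarrow> 'a set" where
  "grid_deviation_event h \<delta> n = (\<Union>(x, \<sigma>)\<in>point_grid d n \<times> scale_grid \<delta> n.
     deviation_event (radial_kernel h d \<sigma> x) n (deviation_level d n))"

definition bad_event :: "real \<Rightarrow> nat \<Rightarrow> 'a set" where
  "bad_event \<delta> n =
     large_sample_event n \<union> grid_deviation_event kf_profile \<delta> n \<union> grid_deviation_event kg_profile \<delta> n"

lemma large_sample_event_in_events: "large_sample_event n \<in> events"
  unfolding large_sample_event_def by measurable

lemma grid_deviation_event_in_events:
  assumes "kernel_profile h h'"
  shows "grid_deviation_event h \<delta> n \<in> events"
  unfolding grid_deviation_event_def case_prod_beta
  by (intro sets.finite_UN finite_SigmaI finite_point_grid finite_scale_grid ballI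
      deviation_event_in_events[OF law.measurable_radial_kernel[OF assms]])

lemma bad_event_in_events: "bad_event \<delta> n \<in> events"
  unfolding bad_event_def
  by (intro sets.Un large_sample_event_in_events
      grid_deviation_event_in_events[OF kf_profile.kernel_profile_axioms]
      grid_deviation_event_in_events[OF kg_profile.kernel_profile_axioms])

lemma prob_large_sample_event:
  assumes "1 \<le> n"
  shows "prob (large_sample_event n) \<le> C / real n ^ 2"
proof -
  have "prob {\<omega> \<in> space M. sample_radius n \<le> vnorm d (X i \<omega>)} \<le> C / real n ^ 3" for i
  proof -
    have w: "0 \<le> 3 * ln (real n) / c1" using assms c1_pos by simp
    have "prob {\<omega> \<in> space M. sample_radius n \<le> vnorm d (X i \<omega>)}
        \<le> C * exp (- (c1 * (sqrt (3 * ln (real n) / c1))\<^sup>2))"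
      unfolding prob_sample_norm_ge sample_radius_def using norm_tail[OF real_sqrt_ge_zero[OF w]] .
    also have "\<dots> = C * exp (- (real 3 * ln (real n)))" using w c1_pos by simp
    also have "\<dots> = C / real n ^ 3" using assms exp_neg_mult_ln[of "real n" 3] by simp
    finally show ?thesis .
  qed
  then have "prob (large_sample_event n) \<le> (\<Sum>i\<in>{1..n}. C / real n ^ 3)"
    unfolding large_sample_event_def
    by (intro order.trans[OF finite_measure_subadditive_finite] sum_mono) auto
  also have "\<dots> = C / real n ^ 2" using assms by (simp add: power2_eq_square power3_eq_cube)
  finally show ?thesis .
qed

lemma prob_grid_deviation_event:
  assumes "kernel_profile h h'" "1 \<le> n"
  shows "prob (grid_deviation_event h \<delta> n) \<le> 4 * 3 ^ d / real n ^ 2"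
proof -
  interpret kernel_profile h h' by (rule assms(1))
  define G where "G = point_grid d n \<times> scale_grid \<delta> n"
  have "prob (grid_deviation_event h \<delta> n)
      \<le> (\<Sum>(x, \<sigma>)\<in>G. prob (deviation_event (radial_kernel h d \<sigma> x) n (deviation_level d n)))"
    unfolding grid_deviation_event_def G_def case_prod_beta
    by (intro finite_measure_subadditive_finite finite_SigmaI finite_point_grid finite_scale_grid)
      (auto intro!: deviation_event_in_events[OF law.measurable_radial_kernel[OF assms(1)]])
  also have "\<dots> \<le> (\<Sum>(x, \<sigma>)\<in>G. 2 / (real n ^ 2) ^ (d + 2))"
  proof (intro sum_mono, clarify)
    fix x \<sigma>
    have "0 \<le> deviation_level d n" using assms(2) by (simp add: deviation_level_def)
    then have "prob (deviation_event (radial_kernel h d \<sigma> x) n (deviation_level d n))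
        \<le> 2 * exp (- 2 * real n * (deviation_level d n)\<^sup>2)"
      using range assms(2)
      by (intro prob_deviation_event_le law.measurable_radial_kernel[OF assms(1)]) (auto simp: radial_kernel_def)
    then show "prob (deviation_event (radial_kernel h d \<sigma> x) n (deviation_level d n)) \<le> 2 / (real n ^ 2) ^ (d + 2)"
      using exp_deviation_level[OF assms(2)] by simp
  qed
  also have "\<dots> = real (card G) * 2 / (real n ^ 2) ^ (d + 2)" by simp
  also have "\<dots> \<le> real (2 * 3 ^ d * (n\<^sup>2) ^ (d + 1)) * 2 / (real n ^ 2) ^ (d + 2)"
    unfolding G_def using card_grid_le[OF assms(2)]
    by (intro divide_right_mono mult_right_mono of_nat_mono) auto
  also have "\<dots> = 4 * 3 ^ d / real n ^ 2" using assms(2) by (simp add: field_simps)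
  finally show ?thesis .
qed

lemma AE_eventually_not_bad_event: "AE \<omega> in M. eventually (\<lambda>n. \<omega> \<notin> bad_event \<delta> n) sequentially"
proof (rule borel_cantelli_inverse_square[OF bad_event_in_events])
  fix n :: nat assume "1 \<le> n"
  then have "prob (bad_event \<delta> n) \<le> C / real n ^ 2 + 4 * 3 ^ d / real n ^ 2 + 4 * 3 ^ d / real n ^ 2"
    unfolding bad_event_def
    by (intro measure_Un_le[THEN order.trans] add_mono sets.Un prob_large_sample_event
        large_sample_event_in_events order.refl
        grid_deviation_event_in_events[OF kf_profile.kernel_profile_axioms]
        grid_deviation_event_in_events[OF kg_profile.kernel_profile_axioms]
        prob_grid_deviation_event[OF kf_profile.kernel_profile_axioms]
        prob_grid_deviation_event[OF kg_profile.kernel_profile_axioms])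
  then show "prob (bad_event \<delta> n) \<le> (C + 8 * 3 ^ d) / real n ^ 2" by (simp add: add_divide_distrib)
qed

lemma sample_radius_sq_le:
  assumes "1 \<le> n"
  shows "(sample_radius n)\<^sup>2 \<le> 2 * real d + 6 / c1 * ln (real n)"
proof -
  have "0 \<le> 3 * ln (real n) / c1" using assms c1_pos by simp
  then show ?thesis
    using power2_sum_le[of "sqrt (real d)" "sqrt (3 * ln (real n) / c1)"] by (simp add: sample_radius_def)
qed

lemma eventually_sample_radius_le: "eventually (\<lambda>n. sample_radius n \<le> real n) sequentially"
  unfolding eventually_sequentially
proof (intro exI allI impI)
  fix n assume n: "2 * d + nat \<lceil>12 / c1\<rceil> + 1 \<le> n"
  have "sqrt (real d) \<le> real n / 2"
    using n abs_le_half_plus_half_sq[of "sqrt (real d)"] by simp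
  moreover have "3 * ln (real n) / c1 \<le> (real n / 2)\<^sup>2"
  proof -
    have "ln (real n) \<le> real n" using n by (intro ln_bound) auto
    then have "3 * ln (real n) / c1 \<le> real n * (12 / c1) / 4" using c1_pos by (simp add: divide_right_mono)
    also have "\<dots> \<le> real n * real n / 4" using n c1_pos by (intro divide_right_mono mult_left_mono) linarith+
    finally show ?thesis by (simp add: power2_eq_square)
  qed
  from real_sqrt_le_mono[OF this] have "sqrt (3 * ln (real n) / c1) \<le> real n / 2" by simp
  ultimately show "sample_radius n \<le> real n" unfolding sample_radius_def by linarith
qed

definition half_mass_radius :: real
  where "half_mass_radius = sqrt (real d) + sqrt (ln (2 * C + 1) / c1)"

lemma half_mass_radius_nonneg: "0 \<le> half_mass_radius"
  using C_pos c1_pos by (simp add: half_mass_radius_def)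

lemma prob_half_mass_radius: "law.prob {y \<in> space \<mu>. half_mass_radius \<le> vnorm d y} \<le> 1/2"
proof -
  have t: "0 \<le> ln (2 * C + 1) / c1" using C_pos c1_pos by simp
  have "law.prob {y \<in> space \<mu>. half_mass_radius \<le> vnorm d y}
      \<le> C * exp (- (c1 * (sqrt (ln (2 * C + 1) / c1))\<^sup>2))"
    unfolding half_mass_radius_def by (rule norm_tail[OF real_sqrt_ge_zero[OF t]])
  also have "\<dots> = C / (2 * C + 1)" using C_pos c1_pos t by (simp add: exp_minus field_simps)
  also have "\<dots> \<le> 1/2" using C_pos by (simp add: field_simps)
  finally show ?thesis .
qed

lemma integral_kf_lower_bound_sample:
  assumes "0 < \<delta>" "\<delta> \<le> \<sigma>" "1 \<le> n" "vnorm d x \<le> sample_radius n"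
  shows "exp (- ((sqrt (real d) + half_mass_radius)\<^sup>2 / \<delta>\<^sup>2)) / 2 * real n powr (- 3 / (c1 * \<delta>\<^sup>2))
    \<le> (\<integral>y. kf d \<sigma> x y \<partial>\<mu>)"
proof -
  define w D where "w = sqrt (3 * ln (real n) / c1)" and "D = sqrt (real d) + half_mass_radius"
  have w2: "w\<^sup>2 = 3 * ln (real n) / c1" using assms c1_pos by (simp add: w_def)
  have "vnorm d x + half_mass_radius \<le> w + D"
    using assms(4) by (simp add: sample_radius_def w_def D_def)
  then have "(vnorm d x + half_mass_radius)\<^sup>2 \<le> (w + D)\<^sup>2"
    using vnorm_nonneg half_mass_radius_nonneg by (intro power_mono) (auto simp: add_nonneg_nonneg)
  also have "\<dots> \<le> 2 * w\<^sup>2 + 2 * D\<^sup>2" by (rule power2_sum_le)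
  finally have "(vnorm d x + half_mass_radius)\<^sup>2 / (2 * \<delta>\<^sup>2) \<le> 3 / (c1 * \<delta>\<^sup>2) * ln (real n) + D\<^sup>2 / \<delta>\<^sup>2"
    using assms(1) c1_pos by (simp add: w2 field_simps)
  then have "exp (- (D\<^sup>2 / \<delta>\<^sup>2)) / 2 * real n powr (- 3 / (c1 * \<delta>\<^sup>2))
      \<le> exp (- ((vnorm d x + half_mass_radius)\<^sup>2 / (2 * \<delta>\<^sup>2))) / 2"
    using assms(3) by (simp add: powr_def flip: exp_add)
  also have "\<dots> \<le> (\<integral>y. kf d \<sigma> x y \<partial>\<mu>)"
    by (rule law.integral_kf_lower_bound[OF assms(1,2) half_mass_radius_nonneg prob_half_mass_radius])
  finally show ?thesis unfolding D_def .
qed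

lemma sample_norm_lt_radius:
  assumes "\<omega> \<in> space M" "\<omega> \<notin> bad_event \<delta> n" "j \<in> {1..n}"
  shows "vnorm d (X j \<omega>) < sample_radius n"
  using assms by (auto simp: bad_event_def large_sample_event_def not_le)

lemma uniform_deviation_off_bad_event:
  assumes "\<omega> \<in> space M" "\<omega> \<notin> bad_event \<delta> n"
    and "1 \<le> n" "0 < \<delta>" "vnorm d x \<le> real n" "\<delta> \<le> \<sigma>" "\<sigma> \<le> \<delta> + real n"
  shows "\<bar>(\<Sum>j=1..n. kf d \<sigma> x (X j \<omega>)) / real n - (\<integral>y. kf d \<sigma> x y \<partial>\<mu>)\<bar>
      \<le> deviation_level d n + 8 / \<delta> * (sqrt (real d) + 1) / real n"
    and "\<bar>(\<Sum>j=1..n. kg d \<sigma> x (X j \<omega>)) / real n - (\<integral>y. kg d \<sigma> x y \<partial>\<mu>)\<bar>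
      \<le> deviation_level d n + 8 / \<delta> * (sqrt (real d) + 1) / real n"
proof -
  have "\<omega> \<notin> grid_deviation_event kf_profile \<delta> n" "\<omega> \<notin> grid_deviation_event kg_profile \<delta> n"
    using assms(2) by (auto simp: bad_event_def)
  then have grid: "\<bar>(\<Sum>j=1..n. radial_kernel h d \<sigma>' x' (X j \<omega>)) / real n
      - (\<integral>y. radial_kernel h d \<sigma>' x' y \<partial>\<mu>)\<bar> < deviation_level d n"
    if "h \<in> {kf_profile, kg_profile}" "x' \<in> point_grid d n" "\<sigma>' \<in> scale_grid \<delta> n" for h x' \<sigma>'
    using that assms(1) by (auto simp: grid_deviation_event_def deviation_event_def not_le)
  show "\<bar>(\<Sum>j=1..n. kf d \<sigma> x (X j \<omega>)) / real n - (\<integral>y. kf d \<sigma> x y \<partial>\<mu>)\<bar>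
      \<le> deviation_level d n + 8 / \<delta> * (sqrt (real d) + 1) / real n"
    unfolding kf_eq_radial_kernel
    by (rule law.uniform_deviation_from_grid[OF kf_profile.kernel_profile_axioms]) (use grid assms in auto)
  show "\<bar>(\<Sum>j=1..n. kg d \<sigma> x (X j \<omega>)) / real n - (\<integral>y. kg d \<sigma> x y \<partial>\<mu>)\<bar>
      \<le> deviation_level d n + 8 / \<delta> * (sqrt (real d) + 1) / real n"
    unfolding kg_eq_radial_kernel
    by (rule law.uniform_deviation_from_grid[OF kg_profile.kernel_profile_axioms]) (use grid assms in auto)
qed

lemma kernel_averages_off_bad_event:
  assumes "\<omega> \<in> space M" "\<omega> \<notin> bad_event \<delta> n" "1 \<le> n" "i \<in> {1..n}" "0 < \<delta>" "\<delta> \<le> \<sigma>"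
  shows "0 < (\<Sum>j=1..n. kf d \<sigma> (X i \<omega>) (X j \<omega>)) / real n"
    and "0 \<le> (\<Sum>j=1..n. kg d \<sigma> (X i \<omega>) (X j \<omega>)) / real n"
    and "(\<Sum>j=1..n. kg d \<sigma> (X i \<omega>) (X j \<omega>)) / real n
      \<le> 2 * (sample_radius n)\<^sup>2 / \<delta>\<^sup>2 * ((\<Sum>j=1..n. kf d \<sigma> (X i \<omega>) (X j \<omega>)) / real n)"
proof -
  show "0 < (\<Sum>j=1..n. kf d \<sigma> (X i \<omega>) (X j \<omega>)) / real n"
    using assms(3) by (intro divide_pos_pos sum_pos) (auto simp: kf_def)
  show "0 \<le> (\<Sum>j=1..n. kg d \<sigma> (X i \<omega>) (X j \<omega>)) / real n"
    by (intro divide_nonneg_nonneg sum_nonneg) (auto simp: kg_def sqdist_eq_vnorm)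
  have "vnorm d (X j \<omega>) \<le> sample_radius n" if "j \<in> {1..n}" for j
    using sample_norm_lt_radius[OF assms(1,2) that] by simp
  then have "(\<Sum>j=1..n. kg d \<sigma> (X i \<omega>) (X j \<omega>))
      \<le> 2 * (sample_radius n)\<^sup>2 / \<delta>\<^sup>2 * (\<Sum>j=1..n. kf d \<sigma> (X i \<omega>) (X j \<omega>))"
    using assms(4-) by (intro sum_kg_le_sum_kf) auto
  then show "(\<Sum>j=1..n. kg d \<sigma> (X i \<omega>) (X j \<omega>)) / real n
      \<le> 2 * (sample_radius n)\<^sup>2 / \<delta>\<^sup>2 * ((\<Sum>j=1..n. kf d \<sigma> (X i \<omega>) (X j \<omega>)) / real n)"
    by (metis divide_right_mono of_nat_0_le_iff times_divide_eq_right)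
qed

lemma ratio_deviation_off_bad_event:
  assumes "0 < \<delta>"
  obtains K where "\<And>\<omega> n \<sigma> i. \<omega> \<in> space M \<Longrightarrow> \<omega> \<notin> bad_event \<delta> n \<Longrightarrow> 3 \<le> n \<Longrightarrow>
    sample_radius n \<le> real n \<Longrightarrow> \<sigma> \<in> {\<delta>..sqrt (real n)} \<Longrightarrow> i \<in> {1..n} \<Longrightarrow>
    kernel_ratio_error \<sigma> n i \<omega> \<le> K * (real n powr (8 / (c1 * \<delta>\<^sup>2) - 1/2) * sqrt (ln (real n)))"
proof -
  define q where "q = 1 / (c1 * \<delta>\<^sup>2)"
  define c0 where "c0 = exp (- ((sqrt (real d) + half_mass_radius)\<^sup>2 / \<delta>\<^sup>2)) / 2"
  define K1 where "K1 = sqrt (real d + 2) + 8 / \<delta> * (sqrt (real d) + 1)"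
  define a b where "a = 4 * real d / \<delta>\<^sup>2" and "b = 12 / (c1 * \<delta>\<^sup>2)"
  show thesis
  proof (rule that[of "2 * K1 * (a + b / (5 * q) + 3 / c0) / c0"])
    fix \<omega> n \<sigma> i
    assume \<omega>: "\<omega> \<in> space M" "\<omega> \<notin> bad_event \<delta> n" and n: "3 \<le> n" "sample_radius n \<le> real n"
      and \<sigma>: "\<sigma> \<in> {\<delta>..sqrt (real n)}" and i: "i \<in> {1..n}"
    define x where "x = X i \<omega>"
    define Fn Gn where "Fn = (\<Sum>j=1..n. kf d \<sigma> x (X j \<omega>)) / real n"
      and "Gn = (\<Sum>j=1..n. kg d \<sigma> x (X j \<omega>)) / real n"
    define F G where "F = (\<integral>y. kf d \<sigma> x y \<partial>\<mu>)" and "G = (\<integral>y. kg d \<sigma> x y \<partial>\<mu>)"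
    define S where "S = 2 * (sample_radius n)\<^sup>2 / \<delta>\<^sup>2"
    define e where "e = deviation_level d n + 8 / \<delta> * (sqrt (real d) + 1) / real n"
    have x: "vnorm d x \<le> sample_radius n"
      using sample_norm_lt_radius[OF \<omega> i] by (simp add: x_def)
    have "\<sigma> \<le> \<delta> + real n" using \<sigma> n sqrt_le_self[of "real n"] assms by auto
    then have dev: "\<bar>Fn - F\<bar> \<le> e" "\<bar>Gn - G\<bar> \<le> e"
      using uniform_deviation_off_bad_event[OF \<omega>] x n \<sigma> assms
      unfolding Fn_def Gn_def F_def G_def e_def by auto
    have sums: "0 < Fn" "0 \<le> Gn" "Gn \<le> S * Fn"
      using kernel_averages_off_bad_event[OF \<omega> _ i assms, of \<sigma>] n \<sigma>
      unfolding Fn_def Gn_def S_def x_def by auto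
    have F: "c0 * real n powr (- 3 * q) \<le> F"
      using integral_kf_lower_bound_sample[OF assms _ _ x, of \<sigma>] n \<sigma> by (simp add: c0_def q_def F_def)
    have "0 < c0 * real n powr (- 3 * q)" using n by (simp add: c0_def)
    with F have "0 < F" by linarith
    have "\<bar>Gn / Fn - G / F\<bar> \<le> 2 * e * (S + 3 / F) / F"
      using law.integral_radial_kernel_le_1 law.integral_radial_kernel_nonneg
        kf_profile.kernel_profile_axioms kg_profile.kernel_profile_axioms
      by (intro ratio_perturbation sums dev \<open>0 < F\<close>)
        (auto simp: F_def G_def kf_eq_radial_kernel kg_eq_radial_kernel)
    also have "\<dots> \<le> 2 * K1 * (a + b / (5 * q) + 3 / c0) / c0 * (real n powr (8 * q - 1/2) * sqrt (ln (real n)))"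
    proof (rule ratio_error_rate)
      show "e \<le> K1 * sqrt (ln (real n)) / sqrt (real n)"
        unfolding e_def K1_def using n assms by (intro deviation_rate) auto
      show "S \<le> a + b * ln (real n)"
        using sample_radius_sq_le[of n] n assms c1_pos
        by (simp add: S_def a_def b_def field_simps divide_right_mono)
    qed (use n assms c1_pos sums dev F in \<open>auto simp: q_def c0_def a_def b_def S_def\<close>)
    finally show "kernel_ratio_error \<sigma> n i \<omega>
      \<le> 2 * K1 * (a + b / (5 * q) + 3 / c0) / c0 * (real n powr (8 / (c1 * \<delta>\<^sup>2) - 1/2) * sqrt (ln (real n)))"
      by (simp add: kernel_ratio_error_def Fn_def Gn_def F_def G_def x_def q_def)
  qed
qed

theorem kernel_ratio_rate:
  assumes "0 < \<delta>"
  shows "AE \<omega> in M. \<exists>K. eventually (\<lambda>n. \<forall>\<sigma>\<in>{\<delta>..sqrt (real n)}. \<forall>i\<in>{1..n}.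
    kernel_ratio_error \<sigma> n i \<omega> \<le> K * (real n powr (8 / (c1 * \<delta>\<^sup>2) - 1/2) * sqrt (ln (real n)))) sequentially"
proof -
  obtain K where K: "\<And>\<omega> n \<sigma> i. \<omega> \<in> space M \<Longrightarrow> \<omega> \<notin> bad_event \<delta> n \<Longrightarrow> 3 \<le> n \<Longrightarrow>
    sample_radius n \<le> real n \<Longrightarrow> \<sigma> \<in> {\<delta>..sqrt (real n)} \<Longrightarrow> i \<in> {1..n} \<Longrightarrow>
    kernel_ratio_error \<sigma> n i \<omega> \<le> K * (real n powr (8 / (c1 * \<delta>\<^sup>2) - 1/2) * sqrt (ln (real n)))"
    using ratio_deviation_off_bad_event[OF assms] by blast
  have large_n: "eventually (\<lambda>n. 3 \<le> n \<and> sample_radius n \<le> real n) sequentially"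
    using eventually_ge_at_top eventually_sample_radius_le by (rule eventually_conj)
  show ?thesis
    using AE_eventually_not_bad_event[of \<delta>] AE_space
  proof eventually_elim
    case (elim \<omega>)
    from elim(1) large_n have "eventually (\<lambda>n. \<forall>\<sigma>\<in>{\<delta>..sqrt (real n)}. \<forall>i\<in>{1..n}.
        kernel_ratio_error \<sigma> n i \<omega> \<le> K * (real n powr (8 / (c1 * \<delta>\<^sup>2) - 1/2) * sqrt (ln (real n)))) sequentially"
      by eventually_elim (use K elim(2) in blast)
    then show ?case by blast
  qed
qed

end

theorem lemma3p6:
  fixes \<nu> :: "real measure" and M :: "'a measure" and X :: "nat \<Rightarrow> 'a \<Rightarrow> (nat \<Rightarrow> real)"
    and d :: nat and c\<^sub>1 C \<delta> :: real
  assumes "prob_space \<nu>" and "sets \<nu> = sets borel" and "subgaussian \<nu>"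
    and "c\<^sub>1 > 0" and "C > 0"
    and "\<forall>t\<ge>0. measure (vec_law d \<nu>) {x \<in> space (vec_law d \<nu>). vnorm d x \<ge> sqrt (real d) + t}
                 \<le> C * exp (- (c\<^sub>1 * t^2))"
    and "prob_space M"
    and "prob_space.indep_vars M (\<lambda>_. vec_law d \<nu>) X UNIV"
    and "\<forall>i. distr M (vec_law d \<nu>) (X i) = vec_law d \<nu>"
    and "\<delta> > 0"
  shows "AE \<omega> in M. \<exists>K. eventually (\<lambda>n.
           \<forall>\<sigma>\<in>{\<delta>..sqrt (real n)}. \<forall>i\<in>{1..n}.
             \<bar>((1 / real n) * (\<Sum>j=1..n. kg d \<sigma> (X i \<omega>) (X j \<omega>)))
                / ((1 / real n) * (\<Sum>j=1..n. kf d \<sigma> (X i \<omega>) (X j \<omega>)))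
              - (\<integral>x'. kg d \<sigma> (X i \<omega>) x' \<partial>vec_law d \<nu>)
                / (\<integral>x'. kf d \<sigma> (X i \<omega>) x' \<partial>vec_law d \<nu>)\<bar>
             \<le> K * (real n powr (8 / (c\<^sub>1 * \<delta>^2) - 1/2) * sqrt (ln (real n)))) sequentially"
proof -
  \<comment> \<open>Sub-Gaussianity of \<nu> enters only through the norm tail hypothesis.\<close>
  have "prob_space (vec_law d \<nu>)"
    unfolding vec_law_def by (intro prob_space_PiM) (use assms(1) in auto)
  moreover have "sets (vec_law d \<nu>) = sets (PiM {..<d} (\<lambda>_. borel))"
    unfolding vec_law_def by (intro sets_PiM_cong) (use assms(2) in auto)
  ultimately interpret norm_concentrated_sample M "vec_law d \<nu>" d X c\<^sub>1 C
    using assms(4-9)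
    by (intro norm_concentrated_sample.intro iid_sample.intro vector_distribution.intro
        vector_distribution_axioms.intro iid_sample_axioms.intro norm_concentrated_sample_axioms.intro) auto
  show ?thesis using kernel_ratio_rate[OF assms(10)] unfolding kernel_ratio_error_def .
qed

end
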